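(* Let $\lambda>0$ and $\overline{S}_{\lambda}=\{z\in\mathbb{S}: d_{\mathbb{S}}(z,0)\leqslant\lambda\}$. Then $$\max\{|z|: z\in\overline{S}_{\lambda}\}=\frac{2}{\pi}\lambda.$$
   Context: $\mathbb{S}=\{z\in\mathbb{C}:-1<\operatorname{Re} z<1\}$. The hyperbolic density of $\mathbb{S}$ is $\rho_{\mathbb{S}}(z)=\frac{\pi}{2}\big/\cos\left(\frac{\pi}{2}\operatorname{Re} z\right)$ and $d_{\mathbb{S}}(z_1,z_2)=\inf_\gamma\int_\gamma\rho_{\mathbb{S}}(z)|dz|$ over $C^1$ curves $\gamma$ in $\mathbb{S}$ joining $z_1$ to $z_2$. *)

theory Defs
  imports "HOL-Analysis.Analysis"
begin

definition strip :: "complex set" where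
  "strip = {z. -1 < Re z \<and> Re z < 1}"

definition rho_S :: "complex \<Rightarrow> real" where
  "rho_S z = (pi / 2) / cos (pi / 2 * Re z)"

definition C1_curve_in :: "complex set \<Rightarrow> (real \<Rightarrow> complex) \<Rightarrow> complex \<Rightarrow> complex \<Rightarrow> bool" where
  "C1_curve_in A g z1 z2 \<longleftrightarrow>
     (\<exists>D. (\<forall>t\<in>{0..1}. (g has_vector_derivative D t) (at t within {0..1}))
          \<and> continuous_on {0..1} D)
     \<and> g ` {0..1} \<subseteq> A \<and> g 0 = z1 \<and> g 1 = z2"

definition hyp_length_S :: "(real \<Rightarrow> complex) \<Rightarrow> real" where
  "hyp_length_S g =
     integral {0..1} (\<lambda>t. rho_S (g t) * norm (vector_derivative g (at t within {0..1})))"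

definition d_S :: "complex \<Rightarrow> complex \<Rightarrow> real" where
  "d_S z1 z2 = (INF g \<in> {g. C1_curve_in strip g z1 z2}. hyp_length_S g)"

end

theory Submission
  imports Defs
begin

text \<open>The density of the strip is at least \<open>\<pi>/2\<close>, with equality exactly on the imaginary
  axis. Hence every curve has hyperbolic length at least \<open>\<pi>/2\<close> times the Euclidean distance of
  its endpoints, and the straight segment along the imaginary axis attains this bound. So on the
  imaginary axis \<open>d\<^sub>S(z, 0) = \<pi>/2 |z|\<close>, while everywhere \<open>d\<^sub>S(z, 0) \<ge> \<pi>/2 |z|\<close>.\<close>

lemma convex_strip: "convex strip"
proof -
  have "strip = {z. Re z > -1} \<inter> {z. Re z < 1}"
    by (auto simp: strip_def)
  then show ?thesis
    by (metis convex_Int convex_halfspace_Re_gt convex_halfspace_Re_lt)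
qed

lemma zero_in_strip: "0 \<in> strip"
  by (simp add: strip_def)

lemma cos_pos_in_strip:
  assumes "z \<in> strip"
  shows "cos (pi / 2 * Re z) > 0"
proof (rule cos_gt_zero_pi)
  have "-1 < Re z" "Re z < 1"
    using assms by (auto simp: strip_def)
  then have "pi / 2 * -1 < pi / 2 * Re z" "pi / 2 * Re z < pi / 2 * 1"
    by (intro mult_strict_left_mono; simp)+
  then show "- (pi / 2) < pi / 2 * Re z" "pi / 2 * Re z < pi / 2"
    by simp_all
qed

lemma rho_S_ge_pi_half:
  assumes "z \<in> strip"
  shows "pi / 2 \<le> rho_S z"
  using cos_pos_in_strip[OF assms] cos_le_one[of "pi / 2 * Re z"]
  by (simp add: rho_S_def field_simps)

lemma rho_S_imag_axis: "Re z = 0 \<Longrightarrow> rho_S z = pi / 2"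
  by (simp add: rho_S_def)

lemma continuous_on_rho_S: "continuous_on strip rho_S"
  unfolding rho_S_def
  by (intro continuous_intros) (fastforce dest: cos_pos_in_strip)

lemma hyp_length_S_ge_norm_diff:
  assumes "C1_curve_in strip g a b"
  shows "pi / 2 * cmod (b - a) \<le> hyp_length_S g"
proof -
  obtain D where D: "\<And>t. t \<in> {0..1} \<Longrightarrow> (g has_vector_derivative D t) (at t within {0..1})"
    and cont_D: "continuous_on {0..1} D" and image_g: "g ` {0..1} \<subseteq> strip"
    and "g 0 = a" "g 1 = b"
    using assms unfolding C1_curve_in_def by blast
  have vd: "vector_derivative g (at t within {0..1}) = D t" if "t \<in> {0..1}" for t
    using vector_derivative_within_cbox[of 0 1 t g "D t"] D[OF that] that by simp
  have ftc: "(D has_integral (b - a)) {0..1}"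
    using fundamental_theorem_of_calculus[of 0 1 g D] D \<open>g 0 = a\<close> \<open>g 1 = b\<close> by simp
  have "continuous_on {0..1} g"
    by (meson D continuous_on_eq_continuous_within has_vector_derivative_continuous)
  then have "continuous_on {0..1} (\<lambda>t. rho_S (g t))"
    using continuous_on_compose2[OF continuous_on_rho_S _ image_g] by blast
  then have int_rho: "(\<lambda>t. rho_S (g t) * norm (D t)) integrable_on {0..1}"
    by (intro integrable_continuous_interval continuous_intros cont_D)
  have int_norm: "(\<lambda>t. norm (D t)) integrable_on {0..1}"
    by (intro integrable_continuous_interval continuous_intros cont_D)
  have "pi / 2 * cmod (b - a) = pi / 2 * norm (integral {0..1} D)"
    using ftc by (simp add: integral_unique)
  also have "\<dots> \<le> pi / 2 * integral {0..1} (\<lambda>t. norm (D t))"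
    using integral_norm_bound_integral[of D "{0..1}" "\<lambda>t. norm (D t)"] ftc int_norm
    by (auto simp: has_integral_integrable)
  also have "\<dots> = integral {0..1} (\<lambda>t. pi / 2 * norm (D t))"
    by simp
  also have "\<dots> \<le> integral {0..1} (\<lambda>t. rho_S (g t) * norm (D t))"
  proof (rule integral_le[OF _ int_rho])
    show "(\<lambda>t. pi / 2 * norm (D t)) integrable_on {0..1}"
      using int_norm by simp
    show "pi / 2 * norm (D t) \<le> rho_S (g t) * norm (D t)" if "t \<in> {0..1}" for t
      using image_g that by (intro mult_right_mono rho_S_ge_pi_half) auto
  qed
  also have "\<dots> = hyp_length_S g"
    unfolding hyp_length_S_def by (rule integral_cong) (simp add: vd)
  finally show ?thesis .
qed

lemma C1_curve_in_linepath:
  assumes "convex A" "a \<in> A" "b \<in> A"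
  shows "C1_curve_in A (linepath a b) a b"
  unfolding C1_curve_in_def
  using has_vector_derivative_linepath_within closed_segment_subset[OF assms(2,3,1)]
  by (auto simp: linepath_image_01 linepath_0' linepath_1' intro!: exI[of _ "\<lambda>_. b - a"])

lemma hyp_length_S_linepath_imag_axis:
  assumes "Re a = 0" "Re b = 0"
  shows "hyp_length_S (linepath a b) = pi / 2 * cmod (b - a)"
proof -
  have "rho_S (linepath a b t) * norm (vector_derivative (linepath a b) (at t within {0..1}))
      = pi / 2 * cmod (b - a)" if "t \<in> {0..1}" for t
    using that assms has_vector_derivative_linepath_within[of a b t "{0..1}"]
      vector_derivative_within_cbox[of 0 1 t "linepath a b" "b - a"]
    by (simp add: rho_S_imag_axis Re_linepath')
  then have "hyp_length_S (linepath a b) = integral {0..1} (\<lambda>t::real. pi / 2 * cmod (b - a))"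
    unfolding hyp_length_S_def by (rule integral_cong)
  then show ?thesis
    by simp
qed

lemma d_S_ge_norm_diff:
  assumes "a \<in> strip" "b \<in> strip"
  shows "pi / 2 * cmod (b - a) \<le> d_S a b"
  unfolding d_S_def
  using C1_curve_in_linepath[OF convex_strip assms] hyp_length_S_ge_norm_diff
  by (intro cINF_greatest) auto

lemma d_S_le_hyp_length_S:
  assumes "C1_curve_in strip g a b"
  shows "d_S a b \<le> hyp_length_S g"
  unfolding d_S_def
  using assms hyp_length_S_ge_norm_diff
  by (intro cINF_lower bdd_belowI[where m = "pi / 2 * cmod (b - a)"]) auto

lemma d_S_imag_axis:
  assumes "Re a = 0" "Re b = 0"
  shows "d_S a b = pi / 2 * cmod (b - a)"
proof -
  have "a \<in> strip" "b \<in> strip"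
    using assms by (simp_all add: strip_def)
  then show ?thesis
    using d_S_ge_norm_diff d_S_le_hyp_length_S[OF C1_curve_in_linepath[OF convex_strip]]
      hyp_length_S_linepath_imag_axis[OF assms]
    by (metis order_antisym)
qed

theorem lemma2:
  fixes lam :: real
  assumes "lam > 0"
  shows "(\<exists>z\<in>{z \<in> strip. d_S z 0 \<le> lam}. cmod z = 2 / pi * lam)
       \<and> (\<forall>z\<in>{z \<in> strip. d_S z 0 \<le> lam}. cmod z \<le> 2 / pi * lam)"
proof
  define z where "z = Complex 0 (2 / pi * lam)"
  have "z \<in> strip"
    by (simp add: z_def strip_def)
  moreover have norm_z: "cmod z = 2 / pi * lam"
    using assms by (simp add: z_def cmod_def)
  moreover have "d_S z 0 = lam"
    using d_S_imag_axis[of z 0] norm_z by (simp add: z_def)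
  ultimately show "\<exists>z\<in>{z \<in> strip. d_S z 0 \<le> lam}. cmod z = 2 / pi * lam"
    by auto
next
  show "\<forall>z\<in>{z \<in> strip. d_S z 0 \<le> lam}. cmod z \<le> 2 / pi * lam"
  proof safe
    fix w assume "w \<in> strip" "d_S w 0 \<le> lam"
    then have "pi / 2 * cmod w \<le> lam"
      using d_S_ge_norm_diff[OF _ zero_in_strip, of w] by simp
    then show "cmod w \<le> 2 / pi * lam"
      by (simp add: field_simps)
  qed
qed

end
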